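(* Let $\mathcal{A}$ be a complex Banach algebra with identity, $\lambda$ a nonzero complex number, and $M = \begin{pmatrix} A & B \\ C & D \end{pmatrix} \in M_2(\mathcal{A})$ with $A, D \in \mathcal{A}^d$. If $$AB = \lambda A^\pi B D,\quad DC = 0,\quad BC = 0,$$ then $M \in M_2(\mathcal{A})^d$ and $$M^d = \begin{pmatrix} A^d & 0 \\ 0 & D^d \end{pmatrix} + \sum_{n=0}^{\infty} M^n Q (P^d)^{n+2},$$ where $Q = \begin{pmatrix} 0 & B \\ C & 0 \end{pmatrix}$ and $P^d = \begin{pmatrix} A^d & 0 \\ 0 & D^d \end{pmatrix}$.
   Context: $M_2(\mathcal{A})$ is the Banach algebra of $2\times 2$ matrices over $\mathcal{A}$. An element $x$ of a Banach algebra has a generalized Drazin (g-Drazin) inverse $x^d$ if $x^d$ commutes with $x$, $x^d = x^dxx^d$ and $x - x^2x^d$ is quasinilpotent (i.e. $\lim\|y^n\|^{1/n}=0$ for $y=x-x^2x^d$); $\mathcal{A}^d$ (resp. $M_2(\mathcal{A})^d$) denotes the set of g-Drazin invertible elements. The spectral idempotent is $x^\pi = 1 - xx^d$. *)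

theory Defs
  imports "HOL-Analysis.Analysis"
begin

class complex_banach_algebra_1 = real_normed_algebra_1 + banach +
  fixes scaleC :: "complex \<Rightarrow> 'a \<Rightarrow> 'a"  (infixr \<open>*\<^sub>C\<close> 75)
  assumes scaleC_of_real: "scaleC (of_real r) x = scaleR r x"
    and scaleC_add_right: "scaleC c (x + y) = scaleC c x + scaleC c y"
    and scaleC_add_left: "scaleC (c + d) x = scaleC c x + scaleC d x"
    and scaleC_scaleC: "scaleC c (scaleC d x) = scaleC (c * d) x"
    and scaleC_one: "scaleC 1 x = x"
    and norm_scaleC: "norm (scaleC c x) = cmod c * norm x"
    and mult_scaleC_left: "scaleC c x * y = scaleC c (x * y)"
    and mult_scaleC_right: "x * scaleC c y = scaleC c (x * y)"

definition quasinilpotent :: "'a::real_normed_algebra_1 \<Rightarrow> bool" where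
  "quasinilpotent y \<longleftrightarrow> (\<lambda>n. root n (norm (y ^ n))) \<longlonglongrightarrow> 0"

definition is_gdrazin_inv :: "'a::real_normed_algebra_1 \<Rightarrow> 'a \<Rightarrow> bool" where
  "is_gdrazin_inv x xd \<longleftrightarrow>
     xd * x = x * xd \<and> xd = xd * x * xd \<and> quasinilpotent (x - x\<^sup>2 * xd)"

definition gdrazin_invertible :: "'a::real_normed_algebra_1 \<Rightarrow> bool" where
  "gdrazin_invertible x \<longleftrightarrow> (\<exists>xd. is_gdrazin_inv x xd)"

text \<open>The g-Drazin inverse (unique when it exists) and the spectral idempotent.\<close>
definition gdrazin :: "'a::real_normed_algebra_1 \<Rightarrow> 'a" where
  "gdrazin x = (THE xd. is_gdrazin_inv x xd)"

definition spec_idem :: "'a::real_normed_algebra_1 \<Rightarrow> 'a" where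
  "spec_idem x = 1 - x * gdrazin x"

text \<open>2x2 matrices over \<open>\<A>\<close>: \<open>(a, b, c, d)\<close> stands for the matrix with rows
  \<open>(a b)\<close> and \<open>(c d)\<close>. The product type carries the (complete) product norm,
  which is equivalent to any Banach algebra norm on \<open>M\<^sub>2(\<A>)\<close>.\<close>
type_synonym 'a mat2 = "'a \<times> 'a \<times> 'a \<times> 'a"

fun m2mult :: "'a::ring_1 mat2 \<Rightarrow> 'a mat2 \<Rightarrow> 'a mat2" where
  "m2mult (a, b, c, d) (e, f, g, h) =
     (a * e + b * g, a * f + b * h, c * e + d * g, c * f + d * h)"

definition m2one :: "'a::ring_1 mat2" where
  "m2one = (1, 0, 0, 1)"

primrec m2pow :: "'a::ring_1 mat2 \<Rightarrow> nat \<Rightarrow> 'a mat2" where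
  "m2pow M 0 = m2one"
| "m2pow M (Suc n) = m2mult M (m2pow M n)"

definition m2_quasinilpotent :: "'a::real_normed_algebra_1 mat2 \<Rightarrow> bool" where
  "m2_quasinilpotent Y \<longleftrightarrow> (\<lambda>n. root n (norm (m2pow Y n))) \<longlonglongrightarrow> 0"

definition m2_is_gdrazin_inv :: "'a::real_normed_algebra_1 mat2 \<Rightarrow> 'a mat2 \<Rightarrow> bool" where
  "m2_is_gdrazin_inv X Xd \<longleftrightarrow>
     m2mult Xd X = m2mult X Xd \<and> Xd = m2mult (m2mult Xd X) Xd \<and>
     m2_quasinilpotent (X - m2mult (m2pow X 2) Xd)"

definition m2_gdrazin_invertible :: "'a::real_normed_algebra_1 mat2 \<Rightarrow> bool" where
  "m2_gdrazin_invertible X \<longleftrightarrow> (\<exists>Xd. m2_is_gdrazin_inv X Xd)"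

definition m2_gdrazin :: "'a::real_normed_algebra_1 mat2 \<Rightarrow> 'a mat2" where
  "m2_gdrazin X = (THE Xd. m2_is_gdrazin_inv X Xd)"

end

theory Submission
  imports Defs
begin

text \<open>Write \<open>e = A\<^sup>d\<close> and \<open>f = D\<^sup>d\<close>. The hypotheses force \<open>e B = 0\<close> (as \<open>e A\<^sup>\<pi> = 0\<close>),
  \<open>f C = 0\<close> (as \<open>D C = 0\<close>) and \<open>B f = 0\<close>: indeed \<open>B f = \<lambda>\<^sup>-\<^sup>1 (A - A\<^sup>2e) (B f) f\<close>, and iterating
  this identity lets the quasinilpotent factor \<open>A - A\<^sup>2e\<close> beat the geometric growth of
  \<open>f\<^sup>n\<close>. Then \<open>X = (e, 0, C e\<^sup>2, f)\<close> commutes with \<open>M\<close>, satisfies \<open>X M X = X\<close>, and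
  \<open>M - M\<^sup>2X\<close> is an upper triangular matrix with quasinilpotent diagonal plus a
  square-zero corner, hence quasinilpotent. Finally every term of the series but the
  first vanishes, and the first one is \<open>X - P\<^sup>d\<close>.\<close>

definition fast_decay :: "(nat \<Rightarrow> real) \<Rightarrow> bool" where
  "fast_decay f \<longleftrightarrow> (\<forall>\<epsilon>>0. \<exists>C. \<forall>n. f n \<le> C * \<epsilon> ^ n)"

lemma fast_decay_if_root_tendsto_zero:
  assumes lim: "(\<lambda>n. root n (f n)) \<longlonglongrightarrow> 0" and nonneg: "\<And>n. 0 \<le> f n"
  shows "fast_decay f"
  unfolding fast_decay_def
proof (intro allI impI)
  fix \<epsilon> :: real assume "\<epsilon> > 0"
  with lim obtain N where N: "\<And>n. n \<ge> N \<Longrightarrow> root n (f n) < \<epsilon>"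
    by (force dest: tendstoD simp: eventually_sequentially)
  have tail: "f n \<le> \<epsilon> ^ n" if "n \<ge> Suc N" for n
  proof -
    have "root n (f n) ^ n \<le> \<epsilon> ^ n"
      using N[of n] that nonneg by (intro power_mono) (auto simp: real_root_ge_zero)
    thus ?thesis using that nonneg by simp
  qed
  define C where "C = 1 + (\<Sum>k<Suc N. f k / \<epsilon> ^ k)"
  have "f n \<le> C * \<epsilon> ^ n" for n
  proof (cases "n \<ge> Suc N")
    case True
    have "0 \<le> (\<Sum>k<Suc N. f k / \<epsilon> ^ k)" using nonneg \<open>\<epsilon> > 0\<close> by (intro sum_nonneg) simp
    then have "\<epsilon> ^ n \<le> C * \<epsilon> ^ n"
      using \<open>\<epsilon> > 0\<close> unfolding C_def by (intro mult_le_cancel_right1[THEN iffD2]) auto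
    then show ?thesis using tail[OF True] by linarith
  next
    case False
    then have "f n / \<epsilon> ^ n \<le> (\<Sum>k<Suc N. f k / \<epsilon> ^ k)"
      using nonneg \<open>\<epsilon> > 0\<close> by (intro member_le_sum[where f = "\<lambda>k. f k / \<epsilon> ^ k"]) auto
    then have "f n \<le> (\<Sum>k<Suc N. f k / \<epsilon> ^ k) * \<epsilon> ^ n"
      using \<open>\<epsilon> > 0\<close> by (simp add: pos_divide_le_eq)
    then show ?thesis
      unfolding C_def distrib_right using zero_less_power[OF \<open>\<epsilon> > 0\<close>, of n] by linarith
  qed
  then show "\<exists>C. \<forall>n. f n \<le> C * \<epsilon> ^ n" by blast
qed

lemma root_tendsto_zero_if_fast_decay:
  assumes decay: "fast_decay f" and nonneg: "\<And>n. 0 \<le> f n"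
  shows "(\<lambda>n. root n (f n)) \<longlonglongrightarrow> 0"
proof (rule LIMSEQ_I)
  fix r :: real assume "r > 0"
  then obtain C where C: "\<And>n. f n \<le> C * (r / 4) ^ n"
    using decay unfolding fast_decay_def by (metis divide_pos_pos zero_less_numeral)
  obtain N where N: "C < 2 ^ N" using real_arch_pow[of 2 C] by auto
  have "root n (f n) \<le> r / 2" if "n \<ge> Suc N" for n
  proof -
    have "(2::real) ^ N \<le> 2 ^ n" using that by (intro power_increasing) auto
    then have "C \<le> 2 ^ n" using N by linarith
    then have "f n \<le> 2 ^ n * (r / 4) ^ n"
      using \<open>r > 0\<close> by (intro order_trans[OF C mult_right_mono]) auto
    also have "\<dots> = (r / 2) ^ n" by (simp flip: power_mult_distrib)
    finally have "root n (f n) \<le> root n ((r / 2) ^ n)"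
      using that by (intro real_root_le_mono) auto
    also have "\<dots> = r / 2" using that \<open>r > 0\<close> by (intro real_root_pos_unique) auto
    finally show ?thesis .
  qed
  moreover have "0 \<le> root n (f n)" for n using nonneg by (simp add: real_root_ge_zero)
  ultimately have "\<forall>n\<ge>Suc N. norm (root n (f n) - 0) < r" using \<open>r > 0\<close> by fastforce
  then show "\<exists>N. \<forall>n\<ge>N. norm (root n (f n) - 0) < r" by blast
qed

lemma fast_decay_iff_root_tendsto_zero:
  "(\<And>n. 0 \<le> f n) \<Longrightarrow> fast_decay f \<longleftrightarrow> (\<lambda>n. root n (f n)) \<longlonglongrightarrow> 0"
  using fast_decay_if_root_tendsto_zero root_tendsto_zero_if_fast_decay by blast

lemma fast_decay_mono: "fast_decay f \<Longrightarrow> (\<And>n. g n \<le> f n) \<Longrightarrow> fast_decay g"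
  unfolding fast_decay_def by (meson order_trans)

lemma fast_decay_add: "fast_decay f \<Longrightarrow> fast_decay g \<Longrightarrow> fast_decay (\<lambda>n. f n + g n)"
  unfolding fast_decay_def by (metis (no_types, opaque_lifting) add_mono distrib_right)

lemma fast_decay_cmult: "fast_decay f \<Longrightarrow> 0 \<le> c \<Longrightarrow> fast_decay (\<lambda>n. c * f n)"
  unfolding fast_decay_def by (metis mult.assoc mult_left_mono)

lemma fast_decay_Suc_iff: "fast_decay (\<lambda>n. f (Suc n)) \<longleftrightarrow> fast_decay f"
proof
  assume decay: "fast_decay (\<lambda>n. f (Suc n))"
  show "fast_decay f"
    unfolding fast_decay_def
  proof (intro allI impI)
    fix \<epsilon> :: real assume "\<epsilon> > 0"
    then obtain C where C: "\<And>n. f (Suc n) \<le> C * \<epsilon> ^ n"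
      using decay unfolding fast_decay_def by blast
    have "f n \<le> max (C / \<epsilon>) (f 0) * \<epsilon> ^ n" for n
    proof (cases n)
      case (Suc m)
      then have "f n \<le> (C / \<epsilon>) * \<epsilon> ^ n" using C[of m] \<open>\<epsilon> > 0\<close> by simp
      also have "\<dots> \<le> max (C / \<epsilon>) (f 0) * \<epsilon> ^ n" using \<open>\<epsilon> > 0\<close> by (intro mult_right_mono) auto
      finally show ?thesis .
    qed simp
    then show "\<exists>C. \<forall>n. f n \<le> C * \<epsilon> ^ n" by blast
  qed
next
  assume "fast_decay f"
  then show "fast_decay (\<lambda>n. f (Suc n))"
    unfolding fast_decay_def by (metis power_Suc mult.assoc)
qed

lemma fast_decay_convolution:
  assumes "fast_decay f" "fast_decay g" "\<And>n. 0 \<le> f n" "\<And>n. 0 \<le> g n"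
  shows "fast_decay (\<lambda>n. \<Sum>k\<le>n. f k * g (n - k))"
  unfolding fast_decay_def
proof (intro allI impI)
  fix \<epsilon> :: real assume "\<epsilon> > 0"
  then obtain C1 C2 where C1: "\<And>n. f n \<le> C1 * (\<epsilon> / 2) ^ n" and C2: "\<And>n. g n \<le> C2 * (\<epsilon> / 2) ^ n"
    using assms(1,2) unfolding fast_decay_def by (meson half_gt_zero)
  have "C1 \<ge> 0" "C2 \<ge> 0" using C1[of 0] C2[of 0] assms(3,4)[of 0] by auto
  have "(\<Sum>k\<le>n. f k * g (n - k)) \<le> (C1 * C2) * \<epsilon> ^ n" for n
  proof -
    have "(\<Sum>k\<le>n. f k * g (n - k)) \<le> (\<Sum>k\<le>n. C1 * (\<epsilon> / 2) ^ k * (C2 * (\<epsilon> / 2) ^ (n - k)))"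
      using C1 C2 assms(3,4) \<open>C1 \<ge> 0\<close> \<open>\<epsilon> > 0\<close> by (intro sum_mono mult_mono) auto
    also have "\<dots> = (\<Sum>k\<le>n. C1 * C2 * (\<epsilon> / 2) ^ n)"
      by (intro sum.cong refl) (simp add: mult_ac flip: power_add)
    also have "\<dots> = real (Suc n) * (C1 * C2 * (\<epsilon> / 2) ^ n)" by simp
    also have "\<dots> \<le> 2 ^ n * (C1 * C2 * (\<epsilon> / 2) ^ n)"
    proof (rule mult_right_mono)
      show "real (Suc n) \<le> 2 ^ n" by (metis Suc_leI less_exp of_nat_le_iff of_nat_numeral of_nat_power)
    qed (use \<open>C1 \<ge> 0\<close> \<open>C2 \<ge> 0\<close> \<open>\<epsilon> > 0\<close> in simp)
    also have "\<dots> = (C1 * C2) * \<epsilon> ^ n" by (simp add: power_divide)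
    finally show ?thesis .
  qed
  then show "\<exists>C. \<forall>n. (\<Sum>k\<le>n. f k * g (n - k)) \<le> C * \<epsilon> ^ n" by blast
qed

text \<open>\<open>M\<^sub>2(\<A>)\<close> carries the product norm, which is submultiplicative only up to a
  constant; hence the g-Drazin theory is developed for \<open>\<parallel>x y\<parallel> \<le> K \<parallel>x\<parallel> \<parallel>y\<parallel>\<close>.\<close>
locale normed_unital_algebra =
  fixes mul :: "'b::real_normed_vector \<Rightarrow> 'b \<Rightarrow> 'b" and one :: 'b and K :: real
  assumes mul_assoc: "mul (mul x y) z = mul x (mul y z)"
    and mul_one_left: "mul one x = x" and mul_one_right: "mul x one = x"
    and mul_add_right: "mul x (y + z) = mul x y + mul x z"
    and mul_add_left: "mul (x + y) z = mul x z + mul y z"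
    and K_pos: "0 < K" and norm_mul_le: "norm (mul x y) \<le> K * norm x * norm y"
begin

lemma mul_zero_left [simp]: "mul 0 x = 0"
  using mul_add_left[of 0 0 x] by simp

lemma mul_zero_right [simp]: "mul x 0 = 0"
  using mul_add_right[of x 0 0] by simp

lemma mul_diff_right: "mul x (y - z) = mul x y - mul x z"
  using mul_add_right[of x "y - z" z] by simp

lemma mul_diff_left: "mul (x - y) z = mul x z - mul y z"
  using mul_add_left[of "x - y" y z] by simp

primrec pow :: "'b \<Rightarrow> nat \<Rightarrow> 'b" where
  "pow x 0 = one"
| "pow x (Suc n) = mul x (pow x n)"

lemma pow_commute: "mul (pow x n) x = mul x (pow x n)"
  by (induction n) (simp_all add: mul_one_left mul_one_right mul_assoc)

lemma pow_2: "pow x 2 = mul x x"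
  by (simp add: numeral_2_eq_2 mul_one_right)

lemma norm_pow_le: "norm (pow x n) \<le> norm one * (K * norm x) ^ n"
proof (induction n)
  case (Suc n)
  have "norm (pow x (Suc n)) \<le> K * norm x * norm (pow x n)" using norm_mul_le by simp
  also have "\<dots> \<le> K * norm x * (norm one * (K * norm x) ^ n)"
    using Suc K_pos by (intro mult_left_mono) auto
  finally show ?case by (simp add: algebra_simps)
qed simp

definition quasinilp :: "'b \<Rightarrow> bool" where
  "quasinilp q \<longleftrightarrow> (\<lambda>n. root n (norm (pow q n))) \<longlonglongrightarrow> 0"

definition is_gd_inv :: "'b \<Rightarrow> 'b \<Rightarrow> bool" where
  "is_gd_inv x y \<longleftrightarrow> mul y x = mul x y \<and> y = mul (mul y x) y \<and> quasinilp (x - mul (pow x 2) y)"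

lemma quasinilp_iff_fast_decay: "quasinilp q \<longleftrightarrow> fast_decay (\<lambda>n. norm (pow q n))"
  unfolding quasinilp_def by (simp add: fast_decay_iff_root_tendsto_zero)

lemma pow_sandwich: "s = mul (mul y s) q \<Longrightarrow> s = mul (mul (pow y n) s) (pow q n)"
proof (induction n)
  case (Suc n)
  have "s = mul (mul y (mul (mul (pow y n) s) (pow q n))) q" using Suc by simp
  also have "\<dots> = mul (mul (pow y (Suc n)) s) (pow q (Suc n))" by (simp add: mul_assoc pow_commute)
  finally show ?case .
qed (simp add: mul_one_left mul_one_right)

text \<open>A quasinilpotent factor beats the at most geometric growth of the other one.\<close>
lemma eq_zero_if_norm_le_pow_mul_pow:
  assumes "quasinilp q"
    and le: "\<And>n. norm s \<le> K * K * norm s * norm (pow y n) * norm (pow q n)"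
  shows "s = 0"
proof -
  define R where "R = K * norm y + 1"
  have "R > 0" unfolding R_def using K_pos by (simp add: add_nonneg_pos)
  obtain C where C: "\<And>n. norm (pow q n) \<le> C * (1 / (2 * R)) ^ n"
  proof -
    have "1 / (2 * R) > 0" using \<open>R > 0\<close> by simp
    then show ?thesis using that \<open>quasinilp q\<close> unfolding quasinilp_iff_fast_decay fast_decay_def by blast
  qed
  have "norm s \<le> (K * K * norm s * norm one * C) * (1 / 2) ^ n" for n
  proof -
    have "norm (pow y n) \<le> norm one * R ^ n"
      using norm_pow_le[of y n] unfolding R_def
      by (smt (verit) mult_left_mono norm_ge_zero power_mono K_pos zero_le_mult_iff)
    then have "norm s \<le> K * K * norm s * (norm one * R ^ n) * (C * (1 / (2 * R)) ^ n)"
      using le[of n] C[of n] K_pos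
      by (smt (verit) mult_left_mono mult_mono mult_nonneg_nonneg norm_ge_zero)
    also have "\<dots> = (K * K * norm s * norm one * C) * (R ^ n * (1 / (2 * R)) ^ n)"
      by (simp add: mult_ac)
    also have "R ^ n * (1 / (2 * R)) ^ n = (1 / 2) ^ n"
      using \<open>R > 0\<close> by (simp flip: power_mult_distrib)
    finally show ?thesis .
  qed
  moreover have "(\<lambda>n. (K * K * norm s * norm one * C) * (1 / 2 :: real) ^ n) \<longlonglongrightarrow> 0"
    by (intro tendsto_mult_right_zero LIMSEQ_power_zero) simp
  ultimately have "norm s \<le> 0" by (intro LIMSEQ_le_const) auto
  then show ?thesis by simp
qed

lemma sandwich_quasinilp_right_eq_zero:
  assumes "quasinilp q" and "s = mul (mul y s) q"
  shows "s = 0"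
proof (rule eq_zero_if_norm_le_pow_mul_pow[OF \<open>quasinilp q\<close>])
  fix n
  have "norm s = norm (mul (mul (pow y n) s) (pow q n))" using pow_sandwich[OF assms(2)] by simp
  also have "\<dots> \<le> K * (K * norm (pow y n) * norm s) * norm (pow q n)"
    by (meson K_pos norm_mul_le order_trans mult_right_mono mult_left_mono norm_ge_zero less_imp_le)
  finally show "norm s \<le> K * K * norm s * norm (pow y n) * norm (pow q n)" by (simp add: mult_ac)
qed

lemma sandwich_quasinilp_left_eq_zero:
  assumes "quasinilp q" and "s = mul (mul q s) y"
  shows "s = 0"
proof (rule eq_zero_if_norm_le_pow_mul_pow[OF \<open>quasinilp q\<close>])
  fix n
  have "norm s = norm (mul (mul (pow q n) s) (pow y n))" using pow_sandwich[OF assms(2)] by simp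
  also have "\<dots> \<le> K * (K * norm (pow q n) * norm s) * norm (pow y n)"
    by (meson K_pos norm_mul_le order_trans mult_right_mono mult_left_mono norm_ge_zero less_imp_le)
  finally show "norm s \<le> K * K * norm s * norm (pow y n) * norm (pow q n)" by (simp add: mult_ac)
qed

lemma is_gd_inv_spectral_idempotent:
  assumes "is_gd_inv x y"
  defines "r \<equiv> mul x y"
  shows "mul y x = r" "mul y r = y" "mul r y = y" "mul r r = r" "mul x r = mul r x"
    and "quasinilp (mul x (one - r))"
proof -
  have yx: "mul y x = mul x y" and y: "y = mul (mul y x) y" and qn: "quasinilp (x - mul (pow x 2) y)"
    using assms(1) unfolding is_gd_inv_def by auto
  show "mul y x = r" unfolding r_def by (rule yx)
  show yr: "mul y r = y" using y unfolding r_def by (simp add: mul_assoc)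
  show "mul r y = y" using y unfolding r_def yx by simp
  show "mul r r = r" unfolding r_def by (simp add: mul_assoc yr[unfolded r_def])
  show "mul x r = mul r x" unfolding r_def by (simp add: mul_assoc yx)
  have "x - mul (pow x 2) y = mul x (one - r)"
    unfolding r_def pow_2 by (simp add: mul_diff_right mul_one_right mul_assoc)
  then show "quasinilp (mul x (one - r))" using qn by simp
qed

text \<open>With \<open>r = x y\<close> and \<open>p = 1 - r\<close>, both \<open>r w p\<close> and \<open>p w r\<close> are fixed by a sandwich with
  the quasinilpotent part \<open>x p\<close>, hence vanish.\<close>
lemma is_gd_inv_idempotent_commute:
  assumes "is_gd_inv x y" and xw: "mul x w = mul w x"
  shows "mul (mul x y) w = mul w (mul x y)"
proof -
  define r where "r = mul x y"
  define p where "p = one - r"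
  note r = is_gd_inv_spectral_idempotent[OF assms(1), folded r_def]
  have pp: "mul p p = p" and xp: "mul x p = mul p x"
    unfolding p_def by (simp_all add: mul_diff_left mul_diff_right mul_one_left mul_one_right r)
  have pxp: "mul p (mul x p) = mul x p" by (metis mul_assoc pp xp)
  have r1: "r + p = one" unfolding p_def by simp
  have "mul (mul r w) p = mul (mul y (mul (mul r w) p)) (mul x p)"
  proof -
    have "mul (mul y (mul (mul r w) p)) (mul x p) = mul (mul (mul y r) w) (mul p (mul x p))"
      by (simp add: mul_assoc)
    also have "\<dots> = mul y (mul w (mul x p))" by (simp add: pxp r mul_assoc)
    also have "\<dots> = mul y (mul x (mul w p))" by (simp add: xw flip: mul_assoc)
    also have "\<dots> = mul (mul r w) p" by (simp add: mul_assoc flip: r(1))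
    finally show ?thesis ..
  qed
  then have rwp: "mul (mul r w) p = 0" using r(6) p_def sandwich_quasinilp_right_eq_zero by metis
  have "mul (mul p w) r = mul (mul (mul x p) (mul (mul p w) r)) y"
  proof -
    have "mul (mul (mul x p) (mul (mul p w) r)) y = mul (mul x (mul p p)) (mul w (mul r y))"
      by (simp add: mul_assoc)
    also have "\<dots> = mul (mul x p) (mul w y)" by (simp add: pp r)
    also have "\<dots> = mul p (mul (mul x w) y)" by (simp add: xp flip: mul_assoc)
    also have "\<dots> = mul (mul p w) r" by (simp add: xw r_def mul_assoc)
    finally show ?thesis ..
  qed
  then have pwr: "mul (mul p w) r = 0" using r(6) p_def sandwich_quasinilp_left_eq_zero by metis
  have "mul r w = mul (mul r w) (r + p)" by (simp add: r1 mul_one_right)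
  also have "\<dots> = mul r (mul w r)" using rwp by (simp add: mul_add_right mul_assoc)
  also have "\<dots> = mul (r + p) (mul w r)" using pwr by (simp add: mul_add_left flip: mul_assoc)
  also have "\<dots> = mul w r" by (simp add: r1 mul_one_left)
  finally show ?thesis unfolding r_def .
qed

lemma is_gd_inv_commute:
  assumes "is_gd_inv x y" and xw: "mul x w = mul w x"
  shows "mul y w = mul w y"
proof -
  define r where "r = mul x y"
  note r = is_gd_inv_spectral_idempotent[OF assms(1), folded r_def]
  have rw: "mul r w = mul w r" unfolding r_def by (rule is_gd_inv_idempotent_commute[OF assms])
  have "mul y w = mul y (mul w r)" by (metis mul_assoc r(2) rw)
  also have "\<dots> = mul (mul y (mul x w)) y" unfolding r_def by (simp add: mul_assoc xw)
  also have "\<dots> = mul (mul r w) y" by (simp add: mul_assoc flip: r(1))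
  also have "\<dots> = mul w y" by (simp add: rw mul_assoc r)
  finally show ?thesis .
qed

lemma is_gd_inv_unique:
  assumes y: "is_gd_inv x y" and z: "is_gd_inv x z"
  shows "y = z"
proof -
  have range_le: "mul x y = mul (mul x y) (mul x z)"
    if y: "is_gd_inv x y" and z: "is_gd_inv x z" and yz: "mul y z = mul z y" for y z
  proof -
    note r = is_gd_inv_spectral_idempotent[OF y]
    note q = is_gd_inv_spectral_idempotent[OF z]
    define p where "p = one - mul x z"
    have pp: "mul p p = p" and xp: "mul x p = mul p x"
      unfolding p_def by (simp_all add: mul_diff_left mul_diff_right mul_one_left mul_one_right q)
    define e where "e = mul (mul x y) p"
    have pxp: "mul p (mul x p) = mul x p" by (metis mul_assoc pp xp)
    have "mul (mul y e) (mul x p) = mul (mul (mul y (mul x y)) x) p"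
      unfolding e_def by (simp add: mul_assoc pxp)
    also have "\<dots> = e" unfolding e_def by (simp add: r(1,2))
    finally have "e = 0" using q(6) p_def sandwich_quasinilp_right_eq_zero by metis
    then show ?thesis unfolding e_def p_def by (simp add: mul_diff_right mul_one_right)
  qed
  have yz: "mul y z = mul z y"
    using is_gd_inv_commute[OF y] z unfolding is_gd_inv_def by simp
  have "mul (mul x y) (mul x z) = mul (mul x z) (mul x y)"
    using y z yz unfolding is_gd_inv_def by (metis mul_assoc)
  then have xy: "mul x y = mul x z"
    using range_le[OF y z yz] range_le[OF z y yz[symmetric]] by simp
  note r = is_gd_inv_spectral_idempotent[OF y]
  note q = is_gd_inv_spectral_idempotent[OF z]
  have "y = mul y (mul x y)" using r by simp
  also have "\<dots> = mul (mul y x) z" by (simp add: xy mul_assoc)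
  also have "\<dots> = mul (mul x z) z" by (simp add: xy r(1))
  also have "\<dots> = mul z (mul x z)" by (simp add: q(1) flip: mul_assoc)
  also have "\<dots> = z" using q by simp
  finally show ?thesis .
qed

lemma is_gd_inv_left_cancel:
  assumes "is_gd_inv x e" and "mul e (mul x b) = 0"
  shows "mul e b = 0"
proof -
  have "e = mul (mul e e) x" using assms(1) unfolding is_gd_inv_def by (metis mul_assoc)
  then have "mul e b = mul e (mul e (mul x b))" by (metis mul_assoc)
  then show ?thesis using assms(2) by simp
qed

lemma is_gd_inv_intertwining_eq_zero:
  assumes "quasinilp q" and "is_gd_inv d f" and qb: "mul q b = mul b d"
  shows "mul b f = 0"
proof (rule sandwich_quasinilp_left_eq_zero[OF \<open>quasinilp q\<close>])
  have "f = mul d (mul f f)" using assms(2) unfolding is_gd_inv_def by (metis mul_assoc)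
  then have "mul b f = mul (mul b d) (mul f f)" by (metis mul_assoc)
  then show "mul b f = mul (mul q (mul b f)) f" by (metis qb mul_assoc)
qed

lemma pow_add_square_zero:
  assumes TS: "mul T S = 0" and SS: "mul S S = 0"
  shows "pow (T + S) (Suc n) = pow T (Suc n) + mul S (pow T n)"
proof (induction n)
  case (Suc n)
  have "pow (T + S) (Suc (Suc n)) = mul (T + S) (pow T (Suc n) + mul S (pow T n))"
    using Suc by simp
  also have "\<dots> = pow T (Suc (Suc n)) + mul (mul T S) (pow T n) + mul S (pow T (Suc n))
      + mul (mul S S) (pow T n)"
    by (simp add: mul_add_right mul_add_left mul_assoc)
  finally show ?case by (simp add: TS SS)
qed (simp add: mul_add_left mul_one_right)

lemma quasinilp_add_square_zero:
  assumes "mul T S = 0" and "mul S S = 0" and "quasinilp T"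
  shows "quasinilp (T + S)"
proof -
  have decay: "fast_decay (\<lambda>n. norm (pow T n))"
    using \<open>quasinilp T\<close> unfolding quasinilp_iff_fast_decay .
  then have "fast_decay (\<lambda>n. norm (pow T (Suc n)) + (K * norm S) * norm (pow T n))"
    using K_pos fast_decay_Suc_iff[of "\<lambda>n. norm (pow T n)"]
    by (intro fast_decay_add fast_decay_cmult) auto
  moreover have "norm (pow (T + S) (Suc n)) \<le> norm (pow T (Suc n)) + (K * norm S) * norm (pow T n)"
    for n
    unfolding pow_add_square_zero[OF assms(1,2)]
    using norm_triangle_ineq norm_mul_le[of S "pow T n"] by (smt (verit))
  ultimately have "fast_decay (\<lambda>n. norm (pow (T + S) (Suc n)))" by (rule fast_decay_mono)
  then show ?thesis
    unfolding quasinilp_iff_fast_decay using fast_decay_Suc_iff[of "\<lambda>n. norm (pow (T + S) n)"] by blast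
qed

end


lemma norm_tuple4_le: "norm (a, b, c, d) \<le> norm a + norm b + norm c + norm d"
  by (smt (verit) norm_Pair_le)

lemma norm_le_norm_tuple4:
  fixes a b c d :: "'a::real_normed_vector"
  shows "norm a \<le> norm (a, b, c, d)" "norm b \<le> norm (a, b, c, d)"
    and "norm c \<le> norm (a, b, c, d)" "norm d \<le> norm (a, b, c, d)"
proof -
  note le = norm_fst_le[of a "(b, c, d)"] norm_fst_le[of b "(c, d)"] norm_fst_le[of c d]
    norm_snd_le[of "(b, c, d)" a] norm_snd_le[of "(c, d)" b] norm_snd_le[of d c]
  show "norm a \<le> norm (a, b, c, d)" "norm b \<le> norm (a, b, c, d)"
    and "norm c \<le> norm (a, b, c, d)" "norm d \<le> norm (a, b, c, d)"
    using le by linarith+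
qed

lemma norm_m2mult_le:
  fixes X Y :: "'a::real_normed_algebra_1 mat2"
  shows "norm (m2mult X Y) \<le> 8 * norm X * norm Y"
proof -
  obtain a b c d e f g h where X: "X = (a, b, c, d)" and Y: "Y = (e, f, g, h)"
    by (metis prod.exhaust)
  have entry: "norm (p * q + r * s) \<le> 2 * (norm X * norm Y)"
    if "p \<in> {a, b, c, d}" "r \<in> {a, b, c, d}" "q \<in> {e, f, g, h}" "s \<in> {e, f, g, h}" for p q r s
  proof -
    have "norm p \<le> norm X" "norm r \<le> norm X" "norm q \<le> norm Y" "norm s \<le> norm Y"
      using that norm_le_norm_tuple4 unfolding X Y by blast+
    then have "norm p * norm q + norm r * norm s \<le> norm X * norm Y + norm X * norm Y"
      by (intro add_mono mult_mono) auto
    moreover have "norm (p * q + r * s) \<le> norm p * norm q + norm r * norm s"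
      by (smt (verit) norm_mult_ineq norm_triangle_ineq)
    ultimately show ?thesis by simp
  qed
  have "norm (m2mult X Y) \<le> norm (a * e + b * g) + norm (a * f + b * h)
      + norm (c * e + d * g) + norm (c * f + d * h)"
    unfolding X Y using norm_tuple4_le by simp
  also have "\<dots> \<le> 2 * (norm X * norm Y) + 2 * (norm X * norm Y) + 2 * (norm X * norm Y)
      + 2 * (norm X * norm Y)"
    by (intro add_mono entry) auto
  finally show ?thesis by simp
qed

lemma normed_unital_algebra_m2:
  "normed_unital_algebra (m2mult :: 'a::real_normed_algebra_1 mat2 \<Rightarrow> _) m2one 8"
proof
  fix X Y Z :: "'a mat2"
  show "m2mult (m2mult X Y) Z = m2mult X (m2mult Y Z)"
    "m2mult X (Y + Z) = m2mult X Y + m2mult X Z" "m2mult (X + Y) Z = m2mult X Z + m2mult Y Z"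
    by (cases X rule: prod_cases4; cases Y rule: prod_cases4; cases Z rule: prod_cases4;
        simp add: algebra_simps)+
  show "m2mult m2one X = X" "m2mult X m2one = X"
    by (cases X rule: prod_cases4; simp add: m2one_def)+
qed (simp_all add: norm_m2mult_le)

interpretation m2: normed_unital_algebra "m2mult :: 'a::real_normed_algebra_1 mat2 \<Rightarrow> _" m2one 8
  rewrites "normed_unital_algebra.pow m2mult (m2one :: 'a mat2) = m2pow"
    and "normed_unital_algebra.quasinilp m2mult (m2one :: 'a mat2) = m2_quasinilpotent"
    and "normed_unital_algebra.is_gd_inv m2mult (m2one :: 'a mat2) = m2_is_gdrazin_inv"
proof -
  interpret normed_unital_algebra "m2mult :: 'a mat2 \<Rightarrow> _" m2one 8
    by (rule normed_unital_algebra_m2)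
  show "normed_unital_algebra (m2mult :: 'a mat2 \<Rightarrow> _) m2one 8" ..
  show pow: "pow = m2pow"
  proof (intro ext)
    show "pow X n = m2pow X n" for X n by (induction n) simp_all
  qed
  show qn: "quasinilp = m2_quasinilpotent"
    unfolding quasinilp_def m2_quasinilpotent_def pow ..
  show "is_gd_inv = m2_is_gdrazin_inv"
    unfolding is_gd_inv_def m2_is_gdrazin_inv_def pow qn ..
qed

interpretation alg: normed_unital_algebra "(*) :: 'a::real_normed_algebra_1 \<Rightarrow> _" 1 1
  rewrites "normed_unital_algebra.pow (*) (1 :: 'a) = (^)"
    and "normed_unital_algebra.quasinilp (*) (1 :: 'a) = quasinilpotent"
    and "normed_unital_algebra.is_gd_inv (*) (1 :: 'a) = is_gdrazin_inv"
proof -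
  interpret normed_unital_algebra "(*) :: 'a \<Rightarrow> _" 1 1
    by unfold_locales (simp_all add: algebra_simps norm_mult_ineq)
  show "normed_unital_algebra ((*) :: 'a \<Rightarrow> _) 1 1" ..
  show pow: "pow = (^)"
  proof (intro ext)
    show "pow x n = x ^ n" for x n by (induction n) simp_all
  qed
  show qn: "quasinilp = quasinilpotent"
    unfolding quasinilp_def quasinilpotent_def pow ..
  show "is_gd_inv = is_gdrazin_inv"
    unfolding is_gd_inv_def is_gdrazin_inv_def pow qn ..
qed



lemma is_gdrazin_inv_gdrazin: "gdrazin_invertible x \<Longrightarrow> is_gdrazin_inv x (gdrazin x)"
  unfolding gdrazin_invertible_def gdrazin_def by (metis alg.is_gd_inv_unique theI)

lemma m2_gdrazin_eqI: "m2_is_gdrazin_inv X Y \<Longrightarrow> m2_gdrazin X = Y"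
  unfolding m2_gdrazin_def using m2.is_gd_inv_unique by blast

lemma scaleC_zero_right [simp]: "c *\<^sub>C (0::'a::complex_banach_algebra_1) = 0"
  using scaleC_add_right[of c "0::'a" 0] by simp

lemma scaleC_power: "(c *\<^sub>C u) ^ n = c ^ n *\<^sub>C (u ^ n :: 'a::complex_banach_algebra_1)"
proof (induction n)
  case (Suc n)
  then show ?case by (simp add: mult_scaleC_left mult_scaleC_right scaleC_scaleC mult.commute)
qed (simp add: scaleC_one)

lemma quasinilpotent_scaleC:
  fixes u :: "'a::complex_banach_algebra_1"
  assumes "quasinilpotent u"
  shows "quasinilpotent (c *\<^sub>C u)"
proof -
  have "root n (norm ((c *\<^sub>C u) ^ n)) = cmod c * root n (norm (u ^ n))" for n
    by (cases "n = 0")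
      (simp_all add: scaleC_power norm_scaleC norm_power real_root_mult real_root_power_cancel)
  then show ?thesis
    using assms unfolding quasinilpotent_def by (simp add: tendsto_mult_right_zero)
qed

lemma m2pow_diagonal: "m2pow (a, 0, 0, d) n = (a ^ n, 0, 0, d ^ n :: 'a::real_normed_algebra_1)"
  by (induction n) (simp_all add: m2one_def)

lemma m2pow_upper_triangular:
  fixes u b v :: "'a::real_normed_algebra_1"
  shows "m2pow (u, b, 0, v) n = (u ^ n, \<Sum>k<n. u ^ k * b * v ^ (n - Suc k), 0, v ^ n)"
proof (induction n)
  case (Suc n)
  have "(\<Sum>k<Suc n. u ^ k * b * v ^ (Suc n - Suc k))
      = u * (\<Sum>k<n. u ^ k * b * v ^ (n - Suc k)) + b * v ^ n"
    by (subst sum.lessThan_Suc_shift) (simp add: sum_distrib_left mult.assoc)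
  then show ?case using Suc by (simp add: m2one_def)
qed (simp add: m2one_def)

lemma m2_quasinilpotent_upper_triangular:
  fixes u b v :: "'a::real_normed_algebra_1"
  assumes "quasinilpotent u" and "quasinilpotent v"
  shows "m2_quasinilpotent (u, b, 0, v)"
proof -
  have du: "fast_decay (\<lambda>n. norm (u ^ n))" and dv: "fast_decay (\<lambda>n. norm (v ^ n))"
    using assms unfolding alg.quasinilp_iff_fast_decay by auto
  have "fast_decay (\<lambda>n. norm (u ^ Suc n)
      + (\<Sum>k\<le>n. norm (u ^ k) * (norm b * norm (v ^ (n - k)))) + norm (v ^ Suc n))"
    using du dv fast_decay_Suc_iff[of "\<lambda>n. norm (u ^ n)"] fast_decay_Suc_iff[of "\<lambda>n. norm (v ^ n)"]
    by (intro fast_decay_add fast_decay_convolution fast_decay_cmult) auto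
  moreover have "norm (m2pow (u, b, 0, v) (Suc n)) \<le> norm (u ^ Suc n)
      + (\<Sum>k\<le>n. norm (u ^ k) * (norm b * norm (v ^ (n - k)))) + norm (v ^ Suc n)" for n
  proof -
    have term_le: "norm (u ^ k * b * w) \<le> norm (u ^ k) * (norm b * norm w)" for k w
    proof -
      have "norm (u ^ k * b * w) \<le> norm (u ^ k * b) * norm w" by (rule norm_mult_ineq)
      also have "\<dots> \<le> norm (u ^ k) * norm b * norm w" by (intro mult_right_mono norm_mult_ineq) simp
      finally show ?thesis by (simp add: mult.assoc)
    qed
    have "norm (\<Sum>k\<le>n. u ^ k * b * v ^ (n - k)) \<le> (\<Sum>k\<le>n. norm (u ^ k) * (norm b * norm (v ^ (n - k))))"
      by (intro order_trans[OF norm_sum] sum_mono term_le)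
    moreover have "m2pow (u, b, 0, v) (Suc n) = (u ^ Suc n, \<Sum>k\<le>n. u ^ k * b * v ^ (n - k), 0, v ^ Suc n)"
      unfolding m2pow_upper_triangular[of u b v "Suc n"] by (simp add: lessThan_Suc_atMost)
    ultimately show ?thesis
      using norm_tuple4_le[of "u ^ Suc n" "\<Sum>k\<le>n. u ^ k * b * v ^ (n - k)" "0::'a" "v ^ Suc n"]
      by simp
  qed
  ultimately have "fast_decay (\<lambda>n. norm (m2pow (u, b, 0, v) (Suc n)))" by (rule fast_decay_mono)
  then show ?thesis
    unfolding m2.quasinilp_iff_fast_decay
    using fast_decay_Suc_iff[of "\<lambda>n. norm (m2pow (u, b, 0, v) n)"] by blast
qed


lemma m2_is_gdrazin_inv_block:
  fixes A B C D e f :: "'a::real_normed_algebra_1"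
  assumes e: "is_gdrazin_inv A e" and f: "is_gdrazin_inv D f"
    and eB: "e * B = 0" and Bf: "B * f = 0" and fC: "f * C = 0"
    and BC: "B * C = 0" and DC: "D * C = 0"
  shows "m2_is_gdrazin_inv (A, B, C, D) (e, 0, C * e\<^sup>2, f)"
proof -
  have eA: "e * (A * z) = A * (e * z)" and Ae: "A * (e * (e * z)) = e * z" for z
    using e unfolding is_gdrazin_inv_def by (metis mult.assoc)+
  have fD: "f * (D * z) = D * (f * z)" and Df: "D * (f * (f * z)) = f * z" for z
    using f unfolding is_gdrazin_inv_def by (metis mult.assoc)+
  have zeros: "e * (B * z) = 0" "B * (f * z) = 0" "f * (C * z) = 0" "B * (C * z) = 0" "D * (C * z) = 0"
    for z using eB Bf fC BC DC by (simp_all flip: mult.assoc)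
  have BDf: "B * (D * (f * z)) = 0" for z
    using fD[of z] zeros(2)[of "D * z"] by simp
  note rules = mult.assoc eA Ae fD Df zeros BDf power2_eq_square
    eA[of 1, simplified] Ae[of 1, simplified] fD[of 1, simplified] Df[of 1, simplified]
    eB Bf fC BC DC BDf[of 1, simplified]
  define X where "X = (e, 0::'a, C * e\<^sup>2, f)"
  have "m2mult X (A, B, C, D) = m2mult (A, B, C, D) X"
    and "X = m2mult (m2mult X (A, B, C, D)) X"
    unfolding X_def by (simp_all add: rules ring_distribs)
  moreover have "m2_quasinilpotent ((A, B, C, D) - m2mult (m2pow (A, B, C, D) 2) X)"
  proof -
    define c where "c = C - C * (A * e)"
    have "(A, B, C, D) - m2mult (m2pow (A, B, C, D) 2) X
        = (A - A\<^sup>2 * e, B, 0, D - D\<^sup>2 * f) + (0, 0, c, 0)"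
      unfolding X_def c_def by (simp add: rules ring_distribs numeral_2_eq_2 m2one_def)
    moreover have "m2mult (A - A\<^sup>2 * e, B, 0, D - D\<^sup>2 * f) (0, 0, c, 0) = 0"
      unfolding c_def by (simp add: rules ring_distribs zero_prod_def)
    moreover have "m2mult (0, 0, c, 0) (0, 0, c, 0) = 0" by (simp add: zero_prod_def)
    moreover have "m2_quasinilpotent (A - A\<^sup>2 * e, B, 0, D - D\<^sup>2 * f)"
      using e f unfolding is_gdrazin_inv_def by (intro m2_quasinilpotent_upper_triangular) auto
    ultimately show ?thesis by (metis m2.quasinilp_add_square_zero)
  qed
  ultimately show ?thesis unfolding m2_is_gdrazin_inv_def X_def by simp
qed

text \<open>Only the \<open>n = 0\<close> term of the series survives: \<open>Q P\<^sup>n\<^sup>+\<^sup>2\<close> has its single entry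
  in the lower left corner, which \<open>M\<close> annihilates.\<close>
lemma m2_series_sums_first_term:
  fixes A B C D e f :: "'a::real_normed_algebra_1"
  assumes "B * C = 0" and "D * C = 0" and "B * f = 0"
  shows "(\<lambda>n. m2mult (m2mult (m2pow (A, B, C, D) n) (0, B, C, 0)) (m2pow (e, 0, 0, f) (n + 2)))
    sums (0, 0, C * e\<^sup>2, 0)"
proof -
  have QP: "m2mult (0, B, C, 0) (m2pow (e, 0, 0, f) (n + 2)) = (0, 0, C * e ^ (n + 2), 0)" for n
    using \<open>B * f = 0\<close> by (simp add: m2pow_diagonal power_Suc mult.assoc flip: mult.assoc[of B])
  have M_kills: "m2mult (A, B, C, D) (0, 0, C * z, 0) = 0" for z
    using assms(1,2) by (simp add: zero_prod_def flip: mult.assoc)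
  have "m2mult (m2mult (m2pow (A, B, C, D) n) (0, B, C, 0)) (m2pow (e, 0, 0, f) (n + 2))
      = (if n = 0 then (0, 0, C * e\<^sup>2, 0) else 0)" for n
  proof (cases n)
    case 0
    then show ?thesis using QP[of 0] by (simp add: m2.mul_one_left power2_eq_square)
  next
    case (Suc m)
    let ?M = "(A, B, C, D)"
    have "m2mult (m2mult (m2pow ?M n) (0, B, C, 0)) (m2pow (e, 0, 0, f) (n + 2))
        = m2mult (m2pow ?M n) (0, 0, C * e ^ (n + 2), 0)"
      by (simp only: m2.mul_assoc QP)
    also have "\<dots> = m2mult (m2mult (m2pow ?M m) ?M) (0, 0, C * e ^ (n + 2), 0)"
      by (simp only: Suc m2pow.simps m2.pow_commute)
    also have "\<dots> = 0" by (simp only: m2.mul_assoc M_kills m2.mul_zero_right)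
    finally show ?thesis by (simp only: Suc nat.distinct if_False)
  qed
  then show ?thesis using sums_single[of 0 "\<lambda>_. (0, 0, C * e\<^sup>2, 0)"] by simp
qed


lemma gdrazin_annihilators:
  fixes A B C D :: "'a::complex_banach_algebra_1"
  assumes "lam \<noteq> 0" and A: "gdrazin_invertible A" and D: "gdrazin_invertible D"
    and AB: "A * B = lam *\<^sub>C (spec_idem A * B * D)" and DC: "D * C = 0"
  shows "gdrazin A * B = 0" and "B * gdrazin D = 0" and "gdrazin D * C = 0"
proof -
  define e where "e = gdrazin A"
  define f where "f = gdrazin D"
  have e: "is_gdrazin_inv A e" and f: "is_gdrazin_inv D f"
    unfolding e_def f_def using A D by (simp_all add: is_gdrazin_inv_gdrazin)
  show "gdrazin D * C = 0"
    using alg.is_gd_inv_left_cancel[OF f] DC unfolding f_def by simp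
  have "e * spec_idem A = 0"
    using e unfolding spec_idem_def is_gdrazin_inv_def e_def[symmetric]
    by (simp add: right_diff_distrib mult.assoc)
  then have "e * (A * B) = 0" unfolding AB by (simp add: mult_scaleC_right flip: mult.assoc)
  then have eB: "e * B = 0" by (rule alg.is_gd_inv_left_cancel[OF e])
  then show "gdrazin A * B = 0" unfolding e_def .
  have "spec_idem A * B = B"
    using eB unfolding spec_idem_def e_def[symmetric] by (simp add: left_diff_distrib mult.assoc)
  then have "(inverse lam *\<^sub>C (A - A\<^sup>2 * e)) * B = B * D"
    using eB \<open>lam \<noteq> 0\<close> AB
    by (simp add: mult_scaleC_left left_diff_distrib mult.assoc scaleC_scaleC scaleC_one)
  moreover have "quasinilpotent (inverse lam *\<^sub>C (A - A\<^sup>2 * e))"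
    using e unfolding is_gdrazin_inv_def by (simp add: quasinilpotent_scaleC)
  ultimately have "B * f = 0" using f by (intro alg.is_gd_inv_intertwining_eq_zero)
  then show "B * gdrazin D = 0" unfolding f_def .
qed

theorem corollary3p4:
  fixes A B C D :: "'a::complex_banach_algebra_1" and lam :: complex
  assumes "lam \<noteq> 0"
    and "gdrazin_invertible A" and "gdrazin_invertible D"
    and "A * B = lam *\<^sub>C (spec_idem A * B * D)"
    and "D * C = 0" and "B * C = 0"
  defines "M \<equiv> (A, B, C, D)"
    and "Q \<equiv> (0, B, C, 0)"
    and "Pd \<equiv> (gdrazin A, 0, 0, gdrazin D)"
  shows "m2_gdrazin_invertible M \<and>
    summable (\<lambda>n. m2mult (m2mult (m2pow M n) Q) (m2pow Pd (n + 2))) \<and>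
    m2_gdrazin M = Pd + (\<Sum>n. m2mult (m2mult (m2pow M n) Q) (m2pow Pd (n + 2)))"
proof -
  let ?X = "(gdrazin A, 0, C * (gdrazin A)\<^sup>2, gdrazin D)"
  note annihilators = gdrazin_annihilators[OF assms(1-5)]
  have inv: "m2_is_gdrazin_inv M ?X"
    unfolding M_def using is_gdrazin_inv_gdrazin[OF assms(2)] is_gdrazin_inv_gdrazin[OF assms(3)]
      annihilators assms(6,5) by (rule m2_is_gdrazin_inv_block)
  have sums: "(\<lambda>n. m2mult (m2mult (m2pow M n) Q) (m2pow Pd (n + 2))) sums (0, 0, C * (gdrazin A)\<^sup>2, 0)"
    unfolding M_def Q_def Pd_def using assms(6,5) annihilators(2) by (rule m2_series_sums_first_term)
  show ?thesis
  proof (intro conjI)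
    show "m2_gdrazin_invertible M" unfolding m2_gdrazin_invertible_def using inv by blast
    show "summable (\<lambda>n. m2mult (m2mult (m2pow M n) Q) (m2pow Pd (n + 2)))"
      using sums by (rule sums_summable)
    show "m2_gdrazin M = Pd + (\<Sum>n. m2mult (m2mult (m2pow M n) Q) (m2pow Pd (n + 2)))"
      unfolding m2_gdrazin_eqI[OF inv] sums_unique[OF sums, symmetric] by (simp add: Pd_def)
  qed
qed

end
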